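(* Let $\mathbb{F}$ be any finite field. For inputs $\alpha,\beta\in\mathbb{F}$, choose $a_1,a_2,a_3,b_1,b_2,b_3\in\mathbb{F}$ uniformly at random subject to $a_1+a_2+a_3=\alpha$ and $b_1+b_2+b_3=\beta$, and define $$y_1=(a_2+a_3)(b_2+b_3),\qquad y_2=a_1b_1+a_1b_3+a_3b_1,\qquad y_3=a_1b_2+a_2b_1.$$ (These are the output shares of the $1$-private $3$-server greedy-monomial CNF HSS for multiplication, where server $j$ holds $(a_i,b_i)_{i\ne j}$ and $y_1+y_2+y_3=\alpha\beta$.) Then the joint distribution of $(y_1,y_2,y_3)$ depends only on $\alpha\beta$; that is, for all $\alpha,\beta,\alpha',\beta'\in\mathbb{F}$ with $\alpha\beta=\alpha'\beta'$, the distributions for $(\alpha,\beta)$ and $(\alpha',\beta')$ are identical. In particular this HSS is symmetrically private.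
   Context: An HSS is symmetrically private (SHSS) if for every function $f$ in its class and every input $\mathbf{x}$, the joint distribution of the output shares depends only on $f(\mathbf{x})$. *)

theory Defs
  imports "HOL-Probability.Probability_Mass_Function"
begin

definition share_inputs :: "'a::field \<Rightarrow> 'a \<Rightarrow> (('a \<times> 'a \<times> 'a) \<times> ('a \<times> 'a \<times> 'a)) set" where
  "share_inputs \<alpha> \<beta> =
     {((a1, a2, a3), (b1, b2, b3)). a1 + a2 + a3 = \<alpha> \<and> b1 + b2 + b3 = \<beta>}"

definition output_shares :: "('a::field \<times> 'a \<times> 'a) \<times> ('a \<times> 'a \<times> 'a) \<Rightarrow> 'a \<times> 'a \<times> 'a" where
  "output_shares ab = (case ab of ((a1, a2, a3), (b1, b2, b3)) \<Rightarrow>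
     ((a2 + a3) * (b2 + b3), a1 * b1 + a1 * b3 + a3 * b1, a1 * b2 + a2 * b1))"

definition output_dist :: "'a::{finite,field} \<Rightarrow> 'a \<Rightarrow> ('a \<times> 'a \<times> 'a) pmf" where
  "output_dist \<alpha> \<beta> = map_pmf output_shares (pmf_of_set (share_inputs \<alpha> \<beta>))"

end

theory Submission
  imports Defs
begin

text \<open>Parametrise the sharings by \<open>u = a\<^sub>2 + a\<^sub>3\<close>, \<open>v = b\<^sub>2 + b\<^sub>3\<close> and \<open>(a\<^sub>2, b\<^sub>2)\<close>.
  Then \<open>y\<^sub>1 = u v\<close>, \<open>y\<^sub>3 = (\<alpha> - u) b\<^sub>2 + a\<^sub>2 (\<beta> - v)\<close> and \<open>y\<^sub>2 = \<alpha>\<beta> - y\<^sub>1 - y\<^sub>3\<close>.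
  For fixed \<open>(u, v)\<close> the condition on \<open>(a\<^sub>2, b\<^sub>2)\<close> is one linear equation, which has
  \<open>|\<bbbF>|\<close> solutions unless \<open>(u, v) = (\<alpha>, \<beta>)\<close>. Hence the number of sharings producing
  \<open>(y\<^sub>1, y\<^sub>2, y\<^sub>3)\<close> depends on \<open>(\<alpha>, \<beta>)\<close> only through \<open>\<alpha>\<beta>\<close> and through whether the
  exceptional point \<open>(\<alpha>, \<beta>)\<close> lies on the hyperbola \<open>u v = y\<^sub>1\<close>, i.e. whether \<open>\<alpha>\<beta> = y\<^sub>1\<close>.\<close>

lemma card_solutions_linear_eq:
  fixes p q d :: "'a::{finite,field}"
  shows "card {(x, y). p * y + x * q = d} =
    (if p = 0 \<and> q = 0 then (if d = 0 then CARD('a)^2 else 0) else CARD('a))"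
proof (cases "p = 0")
  case p: True
  show ?thesis
  proof (cases "q = 0")
    case True
    then have "{(x, y). p * y + x * q = d} = (if d = 0 then UNIV else {})"
      using p by auto
    then show ?thesis
      using p True by (simp add: power2_eq_square)
  next
    case False
    have "bij_betw (\<lambda>y. ((d - p * y) / q, y)) UNIV {(x, y). p * y + x * q = d}"
      by (rule bij_betw_byWitness[where f' = snd]) (auto simp: False field_simps)
    then show ?thesis
      using False by (simp add: bij_betw_same_card[symmetric])
  qed
next
  case False
  have "bij_betw (\<lambda>x. (x, (d - x * q) / p)) UNIV {(x, y). p * y + x * q = d}"
    by (rule bij_betw_byWitness[where f' = fst]) (auto simp: False field_simps)
  then show ?thesis
    using False by (simp add: bij_betw_same_card[symmetric])
qed

lemma sum_eq_point_swap:
  fixes f :: "bool \<Rightarrow> 'b::comm_monoid_add"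
  assumes "p \<in> P \<longleftrightarrow> p' \<in> P"
  shows "(\<Sum>x\<in>P. f (x = p)) = (\<Sum>x\<in>P. f (x = p'))"
proof (cases "p \<in> P")
  case True
  define swap where "swap x = (if x = p then p' else if x = p' then p else x)" for x
  show ?thesis
    by (rule sum.reindex_bij_witness[where i = swap and j = swap])
      (use True assms in \<open>auto simp: swap_def\<close>)
next
  case False
  have "x \<noteq> p" "x \<noteq> p'" if "x \<in> P" for x
    using False assms that by auto
  then show ?thesis
    by (intro sum.cong refl) simp
qed

definition share_coords :: "'a::field \<Rightarrow> 'a \<Rightarrow> ('a \<times> 'a) \<times> ('a \<times> 'a) \<Rightarrow> ('a \<times> 'a \<times> 'a) \<times> ('a \<times> 'a \<times> 'a)"
  where "share_coords \<alpha> \<beta> = (\<lambda>((u, v), (a, b)). ((\<alpha> - u, a, u - a), (\<beta> - v, b, v - b)))"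

lemma bij_share_coords: "bij_betw (share_coords \<alpha> \<beta>) UNIV (share_inputs \<alpha> \<beta>)"
  by (rule bij_betw_byWitness[where
        f' = "\<lambda>((a1, a2, a3), (b1, b2, b3)). ((\<alpha> - a1, \<beta> - b1), (a2, b2))"])
    (auto simp: share_coords_def share_inputs_def algebra_simps)

lemma output_shares_share_coords:
  "output_shares (share_coords \<alpha> \<beta> ((u, v), (a, b))) =
    (u * v, \<alpha> * \<beta> - u * v - ((\<alpha> - u) * b + a * (\<beta> - v)), (\<alpha> - u) * b + a * (\<beta> - v))"
  by (simp add: share_coords_def output_shares_def algebra_simps)

lemma pmf_output_dist:
  fixes \<alpha> \<beta> :: "'a::{finite,field}"
  shows "pmf (output_dist \<alpha> \<beta>) y =
    card {z. output_shares (share_coords \<alpha> \<beta> z) = y} / CARD(('a \<times> 'a) \<times> ('a \<times> 'a))"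
proof -
  let ?S = "share_inputs \<alpha> \<beta>"
  have bij: "bij_betw (share_coords \<alpha> \<beta>) UNIV ?S"
    by (rule bij_share_coords)
  then have "?S \<noteq> {}"
    by (auto simp: bij_betw_def)
  then have "pmf (output_dist \<alpha> \<beta>) y = card (?S \<inter> output_shares -` {y}) / card ?S"
    by (simp add: output_dist_def pmf_map measure_pmf_of_set)
  also have "?S \<inter> output_shares -` {y} = share_coords \<alpha> \<beta> ` {z. output_shares (share_coords \<alpha> \<beta> z) = y}"
  proof -
    have "{z. output_shares (share_coords \<alpha> \<beta> z) = y} = share_coords \<alpha> \<beta> -` (output_shares -` {y})"
      by auto
    then show ?thesis
      using bij by (simp add: image_vimage_eq bij_betw_def Int_commute)
  qed
  also have "card \<dots> = card {z. output_shares (share_coords \<alpha> \<beta> z) = y}"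
    using bij by (intro card_image) (auto simp: bij_betw_def inj_on_def)
  also have "card ?S = CARD(('a \<times> 'a) \<times> ('a \<times> 'a))"
    using bij by (simp add: bij_betw_same_card[symmetric])
  finally show ?thesis .
qed

lemma output_fibre_share_coords:
  "{z. output_shares (share_coords \<alpha> \<beta> z) = (y1, y2, y3)} =
    (if y1 + y2 + y3 = \<alpha> * \<beta>
     then Sigma {(u, v). u * v = y1} (\<lambda>(u, v). {(a, b). (\<alpha> - u) * b + a * (\<beta> - v) = y3})
     else {})"
  by (auto simp: output_shares_share_coords algebra_simps)

lemma card_output_fibre_eq:
  fixes \<alpha> \<beta> \<alpha>' \<beta>' :: "'a::{finite,field}"
  assumes "\<alpha> * \<beta> = \<alpha>' * \<beta>'"
  shows "card {z. output_shares (share_coords \<alpha> \<beta> z) = y} =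
    card {z. output_shares (share_coords \<alpha>' \<beta>' z) = y}"
proof -
  obtain y1 y2 y3 where y: "y = (y1, y2, y3)"
    by (cases y) auto
  define line_count where
    "line_count exceptional = (if exceptional then (if y3 = 0 then CARD('a)^2 else 0) else CARD('a))"
    for exceptional
  define hyperbola :: "('a \<times> 'a) set" where "hyperbola = {(u, v). u * v = y1}"
  have card_fibre: "card {z. output_shares (share_coords \<gamma> \<delta> z) = y} =
      (if y1 + y2 + y3 = \<gamma> * \<delta> then \<Sum>x\<in>hyperbola. line_count (x = (\<gamma>, \<delta>)) else 0)"
    for \<gamma> \<delta> :: 'a
  proof -
    have "card {(a, b). (\<gamma> - u) * b + a * (\<delta> - v) = y3} = line_count ((u, v) = (\<gamma>, \<delta>))" for u v
      by (simp add: card_solutions_linear_eq line_count_def)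
    then show ?thesis
      unfolding y output_fibre_share_coords hyperbola_def
      by (simp add: card_SigmaI case_prod_beta prod_eq_iff)
  qed
  have "(\<alpha>, \<beta>) \<in> hyperbola \<longleftrightarrow> (\<alpha>', \<beta>') \<in> hyperbola"
    using assms by (simp add: hyperbola_def)
  then have "(\<Sum>x\<in>hyperbola. line_count (x = (\<alpha>, \<beta>))) = (\<Sum>x\<in>hyperbola. line_count (x = (\<alpha>', \<beta>')))"
    by (rule sum_eq_point_swap)
  then show ?thesis
    unfolding card_fibre assms by simp
qed

theorem mainTheorem18:
  fixes \<alpha> \<beta> \<alpha>' \<beta>' :: "'a::{finite,field}"
  assumes "\<alpha> * \<beta> = \<alpha>' * \<beta>'"
  shows "output_dist \<alpha> \<beta> = output_dist \<alpha>' \<beta>'"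
  by (rule pmf_eqI) (simp add: pmf_output_dist card_output_fibre_eq[OF assms])

end
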